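(* Let $B_k$ denote the number of minimal blocking sets of $\operatorname{PG}(2,q)$ of size $k$. Then for all integers $k$ with $q \leq k \leq 2q$, \[B_k \leq \frac{\binom{q^2 + q + 1}{2k - 2q}}{\binom{k}{2k-2q}}.\]
   Context: $q$ is a prime power and $\operatorname{PG}(2,q)$ is the incidence structure of the $q^2+q+1$ points and $q^2+q+1$ lines of $\mathbb{P}^2$ defined over $\mathbb{F}_q$. A blocking set is a set of points of $\operatorname{PG}(2,q)$ meeting every line of $\operatorname{PG}(2,q)$; it is minimal if no proper subset of it is a blocking set. *)

theory Defs
  imports Complex_Main "HOL-Library.Cardinality"
begin

text \<open>Vectors of F_q^3 are triples; a point is the set of nonzero scalar multiples
  of a nonzero vector (a 1-dimensional subspace minus 0); a line is the set of
  points orthogonal to a fixed nonzero vector (a 2-dimensional subspace).\<close>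

definition proj_pt :: "'a::field \<times> 'a \<times> 'a \<Rightarrow> ('a \<times> 'a \<times> 'a) set" where
  "proj_pt v = {(c * fst v, c * fst (snd v), c * snd (snd v)) | c. c \<noteq> 0}"

definition dot3 :: "'a::field \<times> 'a \<times> 'a \<Rightarrow> 'a \<times> 'a \<times> 'a \<Rightarrow> 'a" where
  "dot3 u v = fst u * fst v + fst (snd u) * fst (snd v) + snd (snd u) * snd (snd v)"

definition pg_points :: "('a::field \<times> 'a \<times> 'a) set set" where
  "pg_points = {proj_pt v | v. v \<noteq> (0, 0, 0)}"

definition pg_lines :: "('a::field \<times> 'a \<times> 'a) set set set" where
  "pg_lines = {{P \<in> pg_points. \<forall>v\<in>P. dot3 u v = 0} | u. u \<noteq> (0, 0, 0)}"

definition blocking_set :: "('a::field \<times> 'a \<times> 'a) set set \<Rightarrow> bool" where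
  "blocking_set B \<longleftrightarrow> B \<subseteq> pg_points \<and> (\<forall>L\<in>pg_lines. B \<inter> L \<noteq> {})"

definition minimal_blocking_set :: "('a::field \<times> 'a \<times> 'a) set set \<Rightarrow> bool" where
  "minimal_blocking_set B \<longleftrightarrow> blocking_set B \<and> (\<forall>B'. B' \<subset> B \<longrightarrow> \<not> blocking_set B')"

definition num_min_blocking :: "'a::field itself \<Rightarrow> nat \<Rightarrow> nat" where
  "num_min_blocking _ k =
     card {B :: ('a \<times> 'a \<times> 'a) set set. minimal_blocking_set B \<and> card B = k}"

end

(* If two distinct minimal blocking sets B, B' of size k shared 2k - 2q points,
   we would get |B| + |B' - B| <= 2q. But pick P in B - B' and a line u meeting B only in P
   (minimality): the set Y = (B - P) together with the points of B' - B off u meets every line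
   except u, and B' meets u outside B. Fixing a point w of Y, the lines other than u that miss w
   form a punctured affine plane, and the Jamison-type bound for covering it (sums of
   polynomials of low degree over F_q^2 vanish) gives |Y| >= 2q - 1, a contradiction. Hence a
   (2k - 2q)-subset of the plane lies in at most one such B, and double counting finishes. *)

theory Submission
  imports Defs "HOL-Computational_Algebra.Polynomial"
begin

section \<open>Power sums over a finite field\<close>

lemma two_le_card_field: "2 \<le> CARD('a::{finite,field})"
proof -
  have "card {0::'a, 1} \<le> CARD('a)" by (intro card_mono) auto
  then show ?thesis by simp
qed

lemma of_nat_card_field: "(of_nat CARD('a::{finite,field}) :: 'a) = 0"
proof -
  have "(\<Sum>x\<in>UNIV. (x::'a) + 1) = (\<Sum>x\<in>UNIV. x)"
    by (rule sum.reindex_bij_witness[where i="\<lambda>x. x - 1" and j="\<lambda>x. x + 1"]) auto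
  then show ?thesis by (simp add: sum.distrib)
qed

lemma card_roots_of_unity_le:
  assumes "0 < n"
  shows "card {x::'a::idom. x ^ n = 1} \<le> n"
proof -
  let ?p = "monom (1::'a) n - 1"
  have "poly ?p 0 \<noteq> 0" using assms by (simp add: poly_monom power_0_left)
  then have "?p \<noteq> 0" by auto
  moreover have "degree ?p \<le> n" by (intro degree_diff_le degree_monom_le) simp
  ultimately show ?thesis
    using card_poly_roots_bound[of ?p] by (simp add: poly_monom)
qed

lemma sum_powers_field_eq_0:
  assumes "i < CARD('a::{finite,field}) - 1"
  shows "(\<Sum>x\<in>UNIV. (x::'a) ^ i) = 0"
proof (cases "i = 0")
  case True
  then show ?thesis by (simp add: of_nat_card_field)
next
  case False
  have "\<exists>c::'a. c \<noteq> 0 \<and> c ^ i \<noteq> 1"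
  proof (rule ccontr)
    assume "\<not> ?thesis"
    then have "UNIV - {0} \<subseteq> {x::'a. x ^ i = 1}" by auto
    then have "card (UNIV - {0::'a}) \<le> card {x::'a. x ^ i = 1}" by (intro card_mono) auto
    also have "\<dots> \<le> i" using False by (intro card_roots_of_unity_le) simp
    finally show False using assms by (simp add: card_Diff_singleton)
  qed
  then obtain c :: 'a where c: "c \<noteq> 0" "c ^ i \<noteq> 1" by blast
  \<comment> \<open>The sum is invariant under the substitution \<open>x \<mapsto> c x\<close>, which multiplies it by \<open>c ^ i\<close>.\<close>
  have "(\<Sum>x\<in>UNIV. (c * x) ^ i) = (\<Sum>x\<in>UNIV. (x::'a) ^ i)"
    by (rule sum.reindex_bij_witness[where i="\<lambda>x. x / c" and j="\<lambda>x. c * x"]) (use c in auto)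
  then have "c ^ i * (\<Sum>x\<in>UNIV. x ^ i) = (\<Sum>x\<in>UNIV. x ^ i)"
    by (simp add: power_mult_distrib sum_distrib_left)
  then have "(c ^ i - 1) * (\<Sum>x\<in>UNIV. x ^ i) = 0"
    by (simp add: algebra_simps)
  then show ?thesis using c by simp
qed

lemma sum_plane_monomial_affine_prod_eq_0:
  fixes \<alpha> \<beta> \<gamma> :: "'b \<Rightarrow> 'a::{finite,field}"
  assumes "finite I" "card I + i + j \<le> 2 * CARD('a) - 3"
  shows "(\<Sum>x\<in>UNIV. \<Sum>y\<in>UNIV. x ^ i * y ^ j * (\<Prod>k\<in>I. \<alpha> k * x + \<beta> k * y + \<gamma> k)) = 0"
  using assms
proof (induction I arbitrary: i j rule: finite_induct)
  case empty
  have "i < CARD('a) - 1 \<or> j < CARD('a) - 1"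
    using empty two_le_card_field[where 'a='a] by linarith
  then show ?case by (auto simp: sum_product[symmetric] sum_powers_field_eq_0)
next
  case (insert k0 I)
  let ?S = "\<lambda>i j. \<Sum>x\<in>UNIV. \<Sum>y\<in>UNIV. x ^ i * y ^ j * (\<Prod>k\<in>I. \<alpha> k * x + \<beta> k * y + \<gamma> k)"
  have IH: "?S i' j' = 0" if "i' + j' \<le> Suc (i + j)" for i' j'
    using insert that by (intro insert.IH) simp
  have "?S (Suc i) j = 0" "?S i (Suc j) = 0" "?S i j = 0"
    by (rule IH; simp)+
  moreover have "(\<Sum>x\<in>UNIV. \<Sum>y\<in>UNIV. x ^ i * y ^ j * (\<Prod>k\<in>insert k0 I. \<alpha> k * x + \<beta> k * y + \<gamma> k))
      = \<alpha> k0 * ?S (Suc i) j + \<beta> k0 * ?S i (Suc j) + \<gamma> k0 * ?S i j"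
    using insert(1,2) by (simp add: sum.distrib sum_distrib_left algebra_simps)
  ultimately show ?case by simp
qed

text \<open>Jamison's bound, in dual form: lines of \<open>F\<^sub>q\<^sup>2\<close> avoiding the origin that cover all
  other points number at least \<open>2q - 2\<close>. Otherwise their product would be a polynomial of
  degree at most \<open>2q - 3\<close> vanishing everywhere except at the origin, yet its sum over the
  plane is \<open>0\<close>.\<close>
lemma card_ge_if_lines_cover_punctured_plane:
  fixes \<alpha> \<beta> \<gamma> :: "'b \<Rightarrow> 'a::{finite,field}"
  assumes "finite I" and \<gamma>: "\<forall>k\<in>I. \<gamma> k \<noteq> 0"
    and cover: "\<And>x y. (x, y) \<noteq> (0, 0) \<Longrightarrow> \<exists>k\<in>I. \<alpha> k * x + \<beta> k * y + \<gamma> k = 0"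
  shows "2 * CARD('a) - 2 \<le> card I"
proof (rule ccontr)
  assume "\<not> ?thesis"
  then have card_I: "card I + 0 + 0 \<le> 2 * CARD('a) - 3" by simp
  define F where "F x y = (\<Prod>k\<in>I. \<alpha> k * x + \<beta> k * y + \<gamma> k)" for x y
  have F_vanish: "F x y = 0" if "(x, y) \<noteq> (0, 0)" for x y
    using cover[OF that] by (auto simp: F_def prod_zero_iff[OF \<open>finite I\<close>])
  have "(\<Sum>x\<in>UNIV. \<Sum>y\<in>UNIV. F x y) = 0"
    using sum_plane_monomial_affine_prod_eq_0[OF \<open>finite I\<close> card_I] by (simp add: F_def)
  moreover have "(\<Sum>x\<in>UNIV. \<Sum>y\<in>UNIV. F x y) = F 0 0"
  proof -
    have "(\<Sum>y\<in>UNIV. F x y) = (if x = 0 then F 0 0 else 0)" for x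
      using sum.remove[of UNIV 0 "F x"] F_vanish[of x] by (auto intro: sum.neutral)
    then show ?thesis by simp
  qed
  moreover have "F 0 0 \<noteq> 0"
    using \<gamma> \<open>finite I\<close> by (simp add: F_def)
  ultimately show False by simp
qed

section \<open>Vectors of the three-dimensional space\<close>

definition smul3 :: "'a::field \<Rightarrow> 'a \<times> 'a \<times> 'a \<Rightarrow> 'a \<times> 'a \<times> 'a" where
  "smul3 t v = (t * fst v, t * fst (snd v), t * snd (snd v))"

definition vadd3 :: "'a::field \<times> 'a \<times> 'a \<Rightarrow> 'a \<times> 'a \<times> 'a \<Rightarrow> 'a \<times> 'a \<times> 'a" where
  "vadd3 v w = (fst v + fst w, fst (snd v) + fst (snd w), snd (snd v) + snd (snd w))"

definition cross3 :: "'a::field \<times> 'a \<times> 'a \<Rightarrow> 'a \<times> 'a \<times> 'a \<Rightarrow> 'a \<times> 'a \<times> 'a" where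
  "cross3 p q = (fst (snd p) * snd (snd q) - snd (snd p) * fst (snd q),
                 snd (snd p) * fst q - fst p * snd (snd q),
                 fst p * fst (snd q) - fst (snd p) * fst q)"

lemma smul3_eq_0_iff: "smul3 t v = (0, 0, 0) \<longleftrightarrow> t = 0 \<or> v = (0, 0, 0)"
  by (cases v) (auto simp: smul3_def)

lemma dot3_smul3: "dot3 (smul3 t v) w = t * dot3 v w"
  by (simp add: smul3_def dot3_def algebra_simps)

lemma dot3_smul3_right: "dot3 v (smul3 t w) = t * dot3 v w"
  by (simp add: smul3_def dot3_def algebra_simps)

lemma dot3_vadd3: "dot3 (vadd3 v w) x = dot3 v x + dot3 w x"
  by (simp add: vadd3_def dot3_def algebra_simps)

lemma dot3_0_left: "dot3 (0, 0, 0) x = 0"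
  by (simp add: dot3_def)

lemma smul3_det_expansion:
  "smul3 (dot3 (cross3 p q) r) d =
     vadd3 (smul3 (dot3 d p) (cross3 q r))
       (vadd3 (smul3 (dot3 d q) (cross3 r p)) (smul3 (dot3 d r) (cross3 p q)))"
proof -
  obtain p1 p2 p3 q1 q2 q3 r1 r2 r3 d1 d2 d3
    where vectors: "p = (p1, p2, p3)" "q = (q1, q2, q3)" "r = (r1, r2, r3)" "d = (d1, d2, d3)"
    by (metis prod_cases3)
  show ?thesis
    unfolding vectors smul3_def vadd3_def cross3_def dot3_def by (simp; intro conjI; algebra)
qed

lemma det_ne_0_if_form_separates:
  assumes "cross3 p q \<noteq> (0, 0, 0)" "dot3 u p = 0" "dot3 u q = 0" "dot3 u r \<noteq> 0"
  shows "dot3 (cross3 p q) r \<noteq> 0"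
proof
  assume "dot3 (cross3 p q) r = 0"
  then have "smul3 (dot3 u r) (cross3 p q) = (0, 0, 0)"
    using smul3_det_expansion[of p q r u] assms(2,3) by (simp add: smul3_def vadd3_def)
  then show False using assms(1,4) by (simp add: smul3_eq_0_iff)
qed

lemma eq_if_dot3_eq_on_basis:
  assumes "dot3 (cross3 p q) r \<noteq> 0"
    and "dot3 c p = dot3 d p" "dot3 c q = dot3 d q" "dot3 c r = dot3 d r"
  shows "c = d"
proof -
  have "smul3 (dot3 (cross3 p q) r) c = smul3 (dot3 (cross3 p q) r) d"
    using assms(2-4) by (simp only: smul3_det_expansion)
  then show ?thesis using assms(1) by (cases c, cases d) (simp add: smul3_def)
qed

lemma exists_dot3_ne_0:
  assumes "u \<noteq> (0, 0, 0)"
  shows "\<exists>w. dot3 u w \<noteq> 0"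
proof -
  obtain a b c where u: "u = (a, b, c)" by (cases u)
  consider "a \<noteq> 0" | "b \<noteq> 0" | "c \<noteq> 0" using assms u by auto
  then show ?thesis
  proof cases
    case 1
    then show ?thesis by (intro exI[of _ "(1, 0, 0)"]) (simp add: u dot3_def)
  next
    case 2
    then show ?thesis by (intro exI[of _ "(0, 1, 0)"]) (simp add: u dot3_def)
  next
    case 3
    then show ?thesis by (intro exI[of _ "(0, 0, 1)"]) (simp add: u dot3_def)
  qed
qed

text \<open>Fixing a point \<open>w\<close> off the line \<open>u\<close>, the lines missing \<open>w\<close>, normalised by
  \<open>c\<cdot>w = u\<cdot>w\<close>, are \<open>u + a e + b f\<close> for a basis \<open>e, f\<close> of the plane orthogonal to \<open>w\<close>;
  the line \<open>u\<close> itself corresponds to \<open>(a, b) = (0, 0)\<close>.\<close>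
lemma exists_affine_chart_of_lines:
  fixes u w :: "'a::field \<times> 'a \<times> 'a"
  assumes "dot3 u w \<noteq> 0"
  shows "\<exists>e f. \<forall>a b. (a, b) \<noteq> (0, 0) \<longrightarrow>
           (\<exists>c. c \<noteq> u \<and> dot3 c w = dot3 u w \<and>
                (\<forall>y. dot3 c y = dot3 u y + a * dot3 e y + b * dot3 f y))"
proof -
  obtain x y z where w: "w = (x, y, z)" by (cases w)
  have "w \<noteq> (0, 0, 0)" using assms by (auto simp: dot3_def)
  have "\<exists>e f. dot3 e w = 0 \<and> dot3 f w = 0 \<and>
          (\<forall>a b. vadd3 (smul3 a e) (smul3 b f) = (0, 0, 0) \<longrightarrow> a = 0 \<and> b = 0)"
  proof -
    consider "x \<noteq> 0" | "y \<noteq> 0" | "z \<noteq> 0"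
      using \<open>w \<noteq> (0, 0, 0)\<close> w by auto
    then show ?thesis
    proof cases
      case 1
      show ?thesis
        by (rule exI[of _ "(-y, x, 0)"], rule exI[of _ "(-z, 0, x)"])
           (use 1 in \<open>auto simp: w dot3_def vadd3_def smul3_def\<close>)
    next
      case 2
      show ?thesis
        by (rule exI[of _ "(y, -x, 0)"], rule exI[of _ "(0, -z, y)"])
           (use 2 in \<open>auto simp: w dot3_def vadd3_def smul3_def\<close>)
    next
      case 3
      show ?thesis
        by (rule exI[of _ "(z, 0, -x)"], rule exI[of _ "(0, z, -y)"])
           (use 3 in \<open>auto simp: w dot3_def vadd3_def smul3_def\<close>)
    qed
  qed
  then obtain e f where ef: "dot3 e w = 0" "dot3 f w = 0"
    and indep: "\<And>a b. vadd3 (smul3 a e) (smul3 b f) = (0, 0, 0) \<Longrightarrow> a = 0 \<and> b = 0"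
    by blast
  have "\<exists>c. c \<noteq> u \<and> dot3 c w = dot3 u w \<and> (\<forall>y. dot3 c y = dot3 u y + a * dot3 e y + b * dot3 f y)"
    if "(a, b) \<noteq> (0, 0)" for a b
  proof (intro exI conjI allI)
    let ?d = "vadd3 (smul3 a e) (smul3 b f)"
    have "?d \<noteq> (0, 0, 0)" using indep that by blast
    then show "vadd3 u ?d \<noteq> u" by (cases u, cases ?d) (simp add: vadd3_def)
    show "dot3 (vadd3 u ?d) w = dot3 u w" using ef by (simp add: dot3_vadd3 dot3_smul3)
    show "dot3 (vadd3 u ?d) y = dot3 u y + a * dot3 e y + b * dot3 f y" for y
      by (simp add: dot3_vadd3 dot3_smul3)
  qed
  then show ?thesis by blast
qed

section \<open>Points and lines of the projective plane\<close>

lemma proj_pt_eq: "proj_pt v = {smul3 c v | c. c \<noteq> 0}"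
  by (simp add: proj_pt_def smul3_def)

lemma mem_proj_pt_iff: "x \<in> proj_pt v \<longleftrightarrow> (\<exists>c. c \<noteq> 0 \<and> x = smul3 c v)"
  unfolding proj_pt_eq by blast

lemma mem_pg_points_iff: "P \<in> pg_points \<longleftrightarrow> (\<exists>v. v \<noteq> (0, 0, 0) \<and> P = proj_pt v)"
  unfolding pg_points_def by blast

lemma mem_pg_lines_iff:
  "L \<in> pg_lines \<longleftrightarrow> (\<exists>u. u \<noteq> (0, 0, 0) \<and> L = {P \<in> pg_points. \<forall>v\<in>P. dot3 u v = 0})"
  unfolding pg_lines_def by blast

lemma mem_proj_pt_self: "v \<in> proj_pt v"
  unfolding mem_proj_pt_iff by (rule exI[of _ 1]) (simp add: smul3_def)

lemma proj_pt_smul3: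
  assumes "t \<noteq> 0"
  shows "proj_pt (smul3 t v) = proj_pt v"
proof (intro set_eqI iffI)
  fix x assume "x \<in> proj_pt (smul3 t v)"
  then obtain c where "c \<noteq> 0" "x = smul3 c (smul3 t v)" unfolding mem_proj_pt_iff by blast
  then show "x \<in> proj_pt v"
    using assms unfolding mem_proj_pt_iff by (intro exI[of _ "c * t"]) (simp add: smul3_def)
next
  fix x assume "x \<in> proj_pt v"
  then obtain c where "c \<noteq> 0" "x = smul3 c v" unfolding mem_proj_pt_iff by blast
  then show "x \<in> proj_pt (smul3 t v)"
    using assms unfolding mem_proj_pt_iff by (intro exI[of _ "c / t"]) (simp add: smul3_def)
qed

lemma proj_pt_eq_if_cross3_eq_0:
  assumes "p \<noteq> (0, 0, 0)" "q \<noteq> (0, 0, 0)" "cross3 p q = (0, 0, 0)"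
  shows "proj_pt p = proj_pt q"
proof -
  obtain p1 p2 p3 where p: "p = (p1, p2, p3)" by (cases p)
  obtain q1 q2 q3 where q: "q = (q1, q2, q3)" by (cases q)
  have c: "p2 * q3 = p3 * q2" "p3 * q1 = p1 * q3" "p1 * q2 = p2 * q1"
    using assms(3) by (auto simp: p q cross3_def)
  consider "p1 \<noteq> 0" | "p2 \<noteq> 0" | "p3 \<noteq> 0" using assms(1) p by auto
  then obtain t where t: "q = smul3 t p"
  proof cases
    case 1
    then show ?thesis using c by (intro that[of "q1 / p1"]) (simp add: p q smul3_def field_simps)
  next
    case 2
    then show ?thesis using c by (intro that[of "q2 / p2"]) (simp add: p q smul3_def field_simps)
  next
    case 3
    then show ?thesis using c by (intro that[of "q3 / p3"]) (simp add: p q smul3_def field_simps)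
  qed
  then have "t \<noteq> 0" using assms(2) by (auto simp: smul3_eq_0_iff)
  then show ?thesis using t proj_pt_smul3 by metis
qed

lemma card_proj_pt:
  fixes v :: "'a::{finite,field} \<times> 'a \<times> 'a"
  assumes "v \<noteq> (0, 0, 0)"
  shows "card (proj_pt v) = CARD('a) - 1"
proof -
  have "inj_on (\<lambda>t. smul3 t v) (UNIV - {0})"
  proof (rule inj_onI)
    fix s t :: 'a assume "smul3 s v = smul3 t v"
    then have "smul3 (s - t) v = (0, 0, 0)" by (simp add: smul3_def algebra_simps)
    then show "s = t" using assms by (simp add: smul3_eq_0_iff)
  qed
  moreover have "proj_pt v = (\<lambda>t. smul3 t v) ` (UNIV - {0})"
    unfolding proj_pt_eq by blast
  ultimately show ?thesis by (simp add: card_image card_Diff_singleton)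
qed

lemma proj_pt_disjoint:
  assumes "proj_pt v \<noteq> proj_pt w"
  shows "proj_pt v \<inter> proj_pt w = {}"
proof (rule ccontr)
  assume "proj_pt v \<inter> proj_pt w \<noteq> {}"
  then obtain x where "x \<in> proj_pt v" "x \<in> proj_pt w" by blast
  then obtain s t where "s \<noteq> 0" "x = smul3 s v" "t \<noteq> 0" "x = smul3 t w"
    unfolding mem_proj_pt_iff by blast
  then have "proj_pt x = proj_pt v" "proj_pt x = proj_pt w"
    using proj_pt_smul3[of s v] proj_pt_smul3[of t w] by simp_all
  then show False using assms by simp
qed

lemma Union_pg_points: "\<Union>pg_points = UNIV - {(0, 0, 0)}"
proof (intro set_eqI iffI)
  fix x assume "x \<in> \<Union>pg_points"
  then obtain P where "P \<in> pg_points" "x \<in> P" by blast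
  then obtain v where v: "v \<noteq> (0, 0, 0)" "x \<in> proj_pt v"
    unfolding mem_pg_points_iff by blast
  then obtain t where "t \<noteq> 0" "x = smul3 t v" unfolding mem_proj_pt_iff by blast
  then show "x \<in> UNIV - {(0, 0, 0)}" using v(1) by (simp add: smul3_eq_0_iff)
next
  fix x :: "'a \<times> 'a \<times> 'a" assume "x \<in> UNIV - {(0, 0, 0)}"
  then have "proj_pt x \<in> pg_points" unfolding mem_pg_points_iff by blast
  then show "x \<in> \<Union>pg_points" using mem_proj_pt_self[of x] by (rule UnionI)
qed

lemma card_pg_points:
  "card (pg_points :: ('a::{finite,field} \<times> 'a \<times> 'a) set set) = CARD('a)^2 + CARD('a) + 1"
proof -
  let ?q = "CARD('a)" and ?P = "pg_points :: ('a \<times> 'a \<times> 'a) set set"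
  have "(?q - 1) * card ?P = card (\<Union>?P)"
  proof (rule card_partition)
    show "card c = ?q - 1" if "c \<in> ?P" for c
      using that card_proj_pt unfolding mem_pg_points_iff by metis
    show "c1 \<inter> c2 = {}" if "c1 \<in> ?P" "c2 \<in> ?P" "c1 \<noteq> c2" for c1 c2
      using that proj_pt_disjoint unfolding mem_pg_points_iff by metis
  qed simp_all
  also have "\<dots> = ?q * (?q * ?q) - 1"
    by (simp add: Union_pg_points card_Diff_singleton)
  also have "\<dots> = (?q - 1) * (?q^2 + ?q + 1)"
    by (cases ?q) (simp_all add: algebra_simps power2_eq_square)
  finally have "(?q - 1) * card ?P = (?q - 1) * (?q^2 + ?q + 1)" .
  moreover have "?q - 1 \<noteq> 0" using two_le_card_field[where 'a='a] by simp
  ultimately show ?thesis by (simp only: mult_cancel_left) blast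
qed

text \<open>Incidence of the point \<open>P\<close> and the line \<open>c\<close> is \<open>dot3 c (pg_rep P) = 0\<close>.\<close>
definition pg_rep :: "('a::field \<times> 'a \<times> 'a) set \<Rightarrow> 'a \<times> 'a \<times> 'a" where
  "pg_rep P = (SOME v. v \<noteq> (0, 0, 0) \<and> P = proj_pt v)"

lemma pg_rep:
  assumes "P \<in> pg_points"
  shows "pg_rep P \<noteq> (0, 0, 0)" and "proj_pt (pg_rep P) = P"
proof -
  have "pg_rep P \<noteq> (0, 0, 0) \<and> P = proj_pt (pg_rep P)"
    using assms unfolding mem_pg_points_iff pg_rep_def by (rule someI_ex)
  then show "pg_rep P \<noteq> (0, 0, 0)" and "proj_pt (pg_rep P) = P" by simp_all
qed

lemma dot3_pg_rep_eq_0_iff: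
  assumes "P \<in> pg_points"
  shows "dot3 c (pg_rep P) = 0 \<longleftrightarrow> (\<forall>v\<in>P. dot3 c v = 0)"
proof
  assume c: "dot3 c (pg_rep P) = 0"
  show "\<forall>v\<in>P. dot3 c v = 0"
  proof
    fix v assume "v \<in> P"
    then have "v \<in> proj_pt (pg_rep P)" using pg_rep(2)[OF assms] by simp
    then obtain t where "v = smul3 t (pg_rep P)" unfolding mem_proj_pt_iff by blast
    then show "dot3 c v = 0" using c by (simp add: dot3_smul3_right)
  qed
next
  assume "\<forall>v\<in>P. dot3 c v = 0"
  moreover have "pg_rep P \<in> P"
    using mem_proj_pt_self[of "pg_rep P"] pg_rep(2)[OF assms] by simp
  ultimately show "dot3 c (pg_rep P) = 0" by blast
qed

lemma blocking_set_meets_line: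
  assumes "blocking_set B" "c \<noteq> (0, 0, 0)"
  shows "\<exists>Q\<in>B. dot3 c (pg_rep Q) = 0"
proof -
  have "{P \<in> pg_points. \<forall>v\<in>P. dot3 c v = 0} \<in> pg_lines"
    unfolding mem_pg_lines_iff using assms(2) by blast
  then have "B \<inter> {P \<in> pg_points. \<forall>v\<in>P. dot3 c v = 0} \<noteq> {}"
    using assms(1) unfolding blocking_set_def by blast
  then obtain Q where Q: "Q \<in> B" "Q \<in> pg_points" "\<forall>v\<in>Q. dot3 c v = 0" by blast
  have "dot3 c (pg_rep Q) = 0" using dot3_pg_rep_eq_0_iff[OF Q(2)] Q(3) by (rule iffD2)
  then show ?thesis using Q(1) by blast
qed

lemma minimal_blocking_set_tangent:
  assumes "minimal_blocking_set B" "P \<in> B"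
  obtains u where "u \<noteq> (0, 0, 0)" "dot3 u (pg_rep P) = 0"
    "\<And>Q. Q \<in> B - {P} \<Longrightarrow> dot3 u (pg_rep Q) \<noteq> 0"
proof -
  have B: "blocking_set B" and not_B: "\<not> blocking_set (B - {P})"
    using assms unfolding minimal_blocking_set_def by blast+
  have pts: "B \<subseteq> pg_points" using B by (simp add: blocking_set_def)
  then obtain L where L: "L \<in> pg_lines" "(B - {P}) \<inter> L = {}"
    using not_B unfolding blocking_set_def by blast
  then obtain u where u: "u \<noteq> (0, 0, 0)" "L = {Q \<in> pg_points. \<forall>v\<in>Q. dot3 u v = 0}"
    unfolding mem_pg_lines_iff by blast
  have "B \<inter> L \<noteq> {}" using B L(1) by (simp add: blocking_set_def)
  then have "P \<in> L" using L(2) by blast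
  show ?thesis
  proof (rule that[OF u(1)])
    have P: "P \<in> pg_points" "\<forall>v\<in>P. dot3 u v = 0" using \<open>P \<in> L\<close> u(2) by blast+
    show "dot3 u (pg_rep P) = 0" using dot3_pg_rep_eq_0_iff[OF P(1)] P(2) by (rule iffD2)
    show "dot3 u (pg_rep Q) \<noteq> 0" if "Q \<in> B - {P}" for Q
    proof -
      have "Q \<notin> L" "Q \<in> pg_points" using that L(2) pts by blast+
      then have "\<not> (\<forall>v\<in>Q. dot3 u v = 0)" using u(2) by blast
      then show ?thesis using dot3_pg_rep_eq_0_iff[OF \<open>Q \<in> pg_points\<close>] by simp
    qed
  qed
qed

section \<open>Two blocking sets of the same size\<close>

text \<open>Replacing \<open>P\<close> by the points of \<open>B'\<close> off the line \<open>u\<close> through \<open>P\<close> gives a set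
  meeting every line other than \<open>u\<close>: a line \<open>c\<close> missed by it meets \<open>B\<close> only in \<open>P\<close> and
  \<open>B'\<close> only on \<open>u\<close>, so \<open>c\<close> and \<open>u\<close> share two points, and being equal on the three
  independent vectors \<open>P, Q, w\<close> they coincide.\<close>
lemma residual_meets_line:
  assumes B: "blocking_set B" and B': "blocking_set B'"
    and P: "P \<in> B" "P \<notin> B'" and uP: "dot3 u (pg_rep P) = 0"
    and w: "dot3 u w \<noteq> 0" and c: "c \<noteq> u" "dot3 c w = dot3 u w"
  shows "\<exists>Q \<in> (B - {P}) \<union> {Q \<in> B' - B. dot3 u (pg_rep Q) \<noteq> 0}. dot3 c (pg_rep Q) = 0"
proof (rule ccontr)
  assume "\<not> ?thesis"
  then have miss: "dot3 c (pg_rep Q) \<noteq> 0"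
    if "Q \<in> B - {P} \<or> Q \<in> B' - B \<and> dot3 u (pg_rep Q) \<noteq> 0" for Q
    using that by blast
  have "c \<noteq> (0, 0, 0)" using c(2) w by (auto simp: dot3_0_left)
  obtain Q where Q: "Q \<in> B'" "dot3 c (pg_rep Q) = 0"
    using blocking_set_meets_line[OF B' \<open>c \<noteq> (0, 0, 0)\<close>] by blast
  obtain R where R: "R \<in> B" "dot3 c (pg_rep R) = 0"
    using blocking_set_meets_line[OF B \<open>c \<noteq> (0, 0, 0)\<close>] by blast
  have "R = P" using miss[of R] R by blast
  have "Q \<notin> B" using miss[of Q] Q P(2) by blast
  then have uQ: "dot3 u (pg_rep Q) = 0" using miss[of Q] Q by blast
  have pts: "P \<in> pg_points" "Q \<in> pg_points"
    using B B' P(1) Q(1) by (auto simp: blocking_set_def)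
  have "P \<noteq> Q" using P(2) Q(1) by blast
  then have "cross3 (pg_rep P) (pg_rep Q) \<noteq> (0, 0, 0)"
    using proj_pt_eq_if_cross3_eq_0[OF pg_rep(1)[OF pts(1)] pg_rep(1)[OF pts(2)]]
      pg_rep(2)[OF pts(1)] pg_rep(2)[OF pts(2)] by argo
  then have "dot3 (cross3 (pg_rep P) (pg_rep Q)) w \<noteq> 0"
    using det_ne_0_if_form_separates uP uQ w by blast
  moreover have "dot3 c (pg_rep P) = dot3 u (pg_rep P)" using R(2) \<open>R = P\<close> uP by simp
  moreover have "dot3 c (pg_rep Q) = dot3 u (pg_rep Q)" using Q(2) uQ by simp
  ultimately have "c = u" using c(2) by (rule eq_if_dot3_eq_on_basis)
  then show False using c(1) by simp
qed

lemma card_residual_ge: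
  fixes B B' :: "('a::{finite,field} \<times> 'a \<times> 'a) set set"
  assumes B: "blocking_set B" and B': "blocking_set B'"
    and P: "P \<in> B" "P \<notin> B'" and uP: "dot3 u (pg_rep P) = 0" "u \<noteq> (0, 0, 0)"
    and tangent: "\<And>Q. Q \<in> B - {P} \<Longrightarrow> dot3 u (pg_rep Q) \<noteq> 0"
  shows "2 * CARD('a) - 1 \<le> card ((B - {P}) \<union> {Q \<in> B' - B. dot3 u (pg_rep Q) \<noteq> 0})"
    (is "_ \<le> card ?Y")
proof -
  have off_u: "dot3 u (pg_rep Q) \<noteq> 0" if "Q \<in> ?Y" for Q using that tangent by blast
  have meets: "\<exists>Q\<in>?Y. dot3 c (pg_rep Q) = 0" if "c \<noteq> u" "dot3 c w = dot3 u w" "dot3 u w \<noteq> 0" for c w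
    using residual_meets_line[OF B B' P uP(1)] that by blast
  obtain w0 where "dot3 u w0 \<noteq> 0" using exists_dot3_ne_0 uP(2) by blast
  then obtain Q0 where Q0: "Q0 \<in> ?Y"
    using exists_affine_chart_of_lines[of u w0] meets[of _ w0] by (metis zero_neq_one prod.inject)
  let ?w = "pg_rep Q0"
  obtain e f where chart: "\<And>a b. (a, b) \<noteq> (0, 0) \<Longrightarrow>
      \<exists>c. c \<noteq> u \<and> dot3 c ?w = dot3 u ?w \<and> (\<forall>y. dot3 c y = dot3 u y + a * dot3 e y + b * dot3 f y)"
    using exists_affine_chart_of_lines off_u[OF Q0] by blast
  have "2 * CARD('a) - 2 \<le> card (?Y - {Q0})"
  proof (rule card_ge_if_lines_cover_punctured_plane)
    show "\<forall>Q\<in>?Y - {Q0}. dot3 u (pg_rep Q) \<noteq> 0" using off_u by blast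
    fix a b :: 'a assume "(a, b) \<noteq> (0, 0)"
    then obtain c where c: "c \<noteq> u" "dot3 c ?w = dot3 u ?w"
      and c_eq: "\<And>y. dot3 c y = dot3 u y + a * dot3 e y + b * dot3 f y"
      using chart by blast
    then obtain Q where "Q \<in> ?Y" "dot3 c (pg_rep Q) = 0"
      using meets off_u[OF Q0] by blast
    moreover have "Q \<noteq> Q0" using calculation c(2) off_u[OF Q0] by auto
    ultimately show "\<exists>Q\<in>?Y - {Q0}. dot3 e (pg_rep Q) * a + dot3 f (pg_rep Q) * b + dot3 u (pg_rep Q) = 0"
      using c_eq by (auto simp: algebra_simps)
  qed simp
  then show ?thesis using Q0 two_le_card_field[where 'a='a] by (simp add: card_Diff_singleton)
qed

text \<open>Minimality gives a tangent \<open>u\<close> at \<open>P \<in> B - B'\<close>; since \<open>B'\<close> meets \<open>u\<close> outside \<open>B\<close>,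
  the residual set has at most \<open>|B| - 1 + |B' - B| - 1\<close> points.\<close>
lemma card_add_card_diff_ge:
  fixes B B' :: "('a::{finite,field} \<times> 'a \<times> 'a) set set"
  assumes mB: "minimal_blocking_set B" and B': "blocking_set B'"
    and "card B = card B'" and "B \<noteq> B'"
  shows "2 * CARD('a) + 1 \<le> card B + card (B' - B)"
proof -
  have B: "blocking_set B" using mB by (simp add: minimal_blocking_set_def)
  have "\<not> B \<subseteq> B'" using assms(3,4) by (metis card_subset_eq finite)
  then obtain P where P: "P \<in> B" "P \<notin> B'" by blast
  obtain u where u: "u \<noteq> (0, 0, 0)" "dot3 u (pg_rep P) = 0"
    and tangent: "\<And>Q. Q \<in> B - {P} \<Longrightarrow> dot3 u (pg_rep Q) \<noteq> 0"
    using minimal_blocking_set_tangent[OF mB P(1)] by blast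
  define Z where "Z = {Q \<in> B' - B. dot3 u (pg_rep Q) \<noteq> 0}"
  have "2 * CARD('a) - 1 \<le> card ((B - {P}) \<union> Z)"
    unfolding Z_def using card_residual_ge[OF B B' P u(2,1) tangent] by blast
  also have "\<dots> \<le> card (B - {P}) + card Z" by (rule card_Un_le)
  also have "card Z < card (B' - B)"
  proof (rule psubset_card_mono)
    obtain Q where "Q \<in> B'" "dot3 u (pg_rep Q) = 0" using blocking_set_meets_line[OF B' u(1)] by blast
    then have "Q \<in> (B' - B) - Z" using tangent u(2) P(2) by (auto simp: Z_def)
    then show "Z \<subset> B' - B" by (auto simp: Z_def)
  qed simp
  moreover have "card (B - {P}) = card B - 1" "0 < card B"
    using P(1) by (auto simp: card_gt_0_iff)
  ultimately show ?thesis using two_le_card_field[where 'a='a] by linarith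
qed

section \<open>Counting\<close>

lemma card_Int_minimal_blocking_sets_less:
  fixes B B' :: "('a::{finite,field} \<times> 'a \<times> 'a) set set"
  assumes "minimal_blocking_set B" "minimal_blocking_set B'"
    and "card B = k" "card B' = k" "B \<noteq> B'"
  shows "card (B \<inter> B') + 2 * CARD('a) < 2 * k"
proof -
  have "2 * CARD('a) + 1 \<le> card B + card (B' - B)"
    using assms by (intro card_add_card_diff_ge) (auto simp: minimal_blocking_set_def)
  moreover have "card (B' - B) + card (B \<inter> B') = card B'"
    by (metis Int_commute card_Diff_subset_Int finite le_add_diff_inverse2 card_mono inf_le1)
  ultimately show ?thesis using assms(3,4) by linarith
qed

lemma card_mult_choose_le_if_small_intersections:
  assumes "finite X" and sub: "\<And>B. B \<in> \<B> \<Longrightarrow> B \<subseteq> X \<and> card B = k"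
    and small: "\<And>B B'. B \<in> \<B> \<Longrightarrow> B' \<in> \<B> \<Longrightarrow> B \<noteq> B' \<Longrightarrow> card (B \<inter> B') < m"
  shows "card \<B> * (k choose m) \<le> card X choose m"
proof -
  let ?S = "\<lambda>B. {T. T \<subseteq> B \<and> card T = m}"
  have fin: "finite B" if "B \<in> \<B>" for B using sub that \<open>finite X\<close> finite_subset by blast
  have "card \<B> * (k choose m) = (\<Sum>B\<in>\<B>. card (?S B))"
    using sub fin by (simp add: n_subsets)
  also have "\<dots> = card (\<Union>B\<in>\<B>. ?S B)"
  proof (rule card_UN_disjoint[symmetric])
    show "finite \<B>" using sub \<open>finite X\<close> by (meson PowI finite_Pow_iff finite_subset subsetI)
    show "\<forall>B\<in>\<B>. \<forall>B'\<in>\<B>. B \<noteq> B' \<longrightarrow> ?S B \<inter> ?S B' = {}"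
    proof (intro ballI impI equals0I)
      fix B B' T assume B: "B \<in> \<B>" "B' \<in> \<B>" "B \<noteq> B'" and "T \<in> ?S B \<inter> ?S B'"
      then have "T \<subseteq> B \<inter> B'" "card T = m" by blast+
      then have "m \<le> card (B \<inter> B')" using fin[OF B(1)] by (metis card_mono finite_Int)
      then show False using small[OF B] by simp
    qed
  qed (use fin in simp)
  also have "\<dots> \<le> card (?S X)"
    using sub \<open>finite X\<close> by (intro card_mono) auto
  also have "\<dots> = card X choose m" using \<open>finite X\<close> by (rule n_subsets)
  finally show ?thesis .
qed

theorem theorem2:
  fixes k :: nat and F :: "'a::{finite,field} itself"
  assumes "CARD('a) \<le> k" and "k \<le> 2 * CARD('a)"
  shows "real (num_min_blocking F k)
           \<le> real ((CARD('a)^2 + CARD('a) + 1) choose (2*k - 2*CARD('a)))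
              / real (k choose (2*k - 2*CARD('a)))"
proof -
  define m where "m = 2*k - 2*CARD('a)"
  let ?\<B> = "{B :: ('a \<times> 'a \<times> 'a) set set. minimal_blocking_set B \<and> card B = k}"
  have "card ?\<B> * (k choose m) \<le> card (pg_points :: ('a \<times> 'a \<times> 'a) set set) choose m"
  proof (rule card_mult_choose_le_if_small_intersections)
    show "B \<subseteq> pg_points \<and> card B = k" if "B \<in> ?\<B>" for B
      using that by (simp add: minimal_blocking_set_def blocking_set_def)
    show "card (B \<inter> B') < m" if "B \<in> ?\<B>" "B' \<in> ?\<B>" "B \<noteq> B'" for B B'
      using card_Int_minimal_blocking_sets_less[of B B' k] that unfolding m_def by auto
  qed simp
  moreover have "0 < k choose m" using assms unfolding m_def by simp
  ultimately show ?thesis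
    by (simp add: num_min_blocking_def card_pg_points m_def[symmetric] pos_le_divide_eq
        flip: of_nat_mult)
qed

end
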